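(* Let $f$ be a positive function on $\mathbb R$ such that there exist $M>0$ and $q_1\in(0,1]$ with $f(x)\le M\psi(q_1x)$ for all $x\in\mathbb R$. Then for all $q_2\in(0,1)$ and all $\sigma\in(0,1-q_2^2)$, $$K_\sigma f(x)\le\frac{2}{\sqrt3}M\psi(q_1q_2x)\quad\text{for all }x\in\mathbb R.$$
   Context: $\psi(x)=\pi^{-1/2}e^{-x^2}$, $\psi_\sigma(x)=\sigma^{-1}\psi(x/\sigma)$, $K_\sigma f=f*\psi_\sigma$. *)

theory Defs
  imports "HOL-Analysis.Analysis"
begin

definition psi :: "real \<Rightarrow> real" where
  "psi x = exp (- (x^2)) / sqrt pi"

definition psi_sigma :: "real \<Rightarrow> real \<Rightarrow> real" where
  "psi_sigma \<sigma> x = psi (x / \<sigma>) / \<sigma>"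

definition conv :: "(real \<Rightarrow> real) \<Rightarrow> (real \<Rightarrow> real) \<Rightarrow> real \<Rightarrow> real" where
  "conv f g x = (\<integral>y. f y * g (x - y) \<partial>lborel)"

definition K :: "real \<Rightarrow> (real \<Rightarrow> real) \<Rightarrow> real \<Rightarrow> real" where
  "K \<sigma> f = conv f (psi_sigma \<sigma>)"

end

theory Submission
  imports Defs "HOL-Probability.Probability"
begin

text \<open>
  Up to the factor \<open>1/q\<^sub>1\<close>, the majorant \<open>M \<psi>(q\<^sub>1 x)\<close> is the Gaussian kernel of width \<open>1/q\<^sub>1\<close>,
  and Gaussian kernels convolve by adding squared widths. Hence \<open>K\<^sub>\<sigma> f\<close> is dominated by
  \<open>M/q\<^sub>1\<close> times the kernel of width \<open>s = (1/q\<^sub>1\<^sup>2 + \<sigma>\<^sup>2)\<^sup>1\<^sup>/\<^sup>2\<close>, i.e. by \<open>M \<psi>(x/s) / (q\<^sub>1 s)\<close>.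
  Since \<open>q\<^sub>1 s \<ge> 1\<close>, and \<open>\<sigma> < 1 - q\<^sub>2\<^sup>2\<close> gives \<open>q\<^sub>1 q\<^sub>2 s \<le> 1\<close>, this is at most \<open>M \<psi>(q\<^sub>1 q\<^sub>2 x)\<close>.
\<close>

lemma psi_sigma_eq_normal_density:
  assumes "s > 0"
  shows "psi_sigma s x = normal_density 0 (s / sqrt 2) x"
proof -
  have "sqrt (2 * pi * (s / sqrt 2)\<^sup>2) = s * sqrt pi"
    using assms by (simp add: power_divide real_sqrt_mult)
  moreover have "- ((x - 0)\<^sup>2) / (2 * (s / sqrt 2)\<^sup>2) = - ((x / s)\<^sup>2)"
    using assms by (simp add: power_divide)
  ultimately show ?thesis
    unfolding psi_sigma_def psi_def normal_density_def by (simp add: field_simps)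
qed

lemma psi_mult_eq_psi_sigma:
  assumes "q > 0"
  shows "psi (q * x) = psi_sigma (1 / q) x / q"
  using assms by (simp add: psi_sigma_def mult.commute)

lemma psi_sigma_nonneg: "s > 0 \<Longrightarrow> 0 \<le> psi_sigma s x"
  by (simp add: psi_sigma_def psi_def)

lemma borel_measurable_psi_sigma [measurable]: "psi_sigma s \<in> borel_measurable borel"
  unfolding psi_sigma_def psi_def by measurable

lemma nn_integral_conv_psi_sigma:
  assumes "a > 0" "b > 0"
  shows "(\<integral>\<^sup>+y. ennreal (psi_sigma a y * psi_sigma b (x - y)) \<partial>lborel)
    = ennreal (psi_sigma (sqrt (a\<^sup>2 + b\<^sup>2)) x)"
proof -
  have "sqrt ((b / sqrt 2)\<^sup>2 + (a / sqrt 2)\<^sup>2) = sqrt (a\<^sup>2 + b\<^sup>2) / sqrt 2"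
    by (simp add: power_divide add_divide_distrib[symmetric] real_sqrt_divide add.commute)
  with fun_cong[OF conv_normal_density_zero_mean, of "b / sqrt 2" "a / sqrt 2" x] assms
  show ?thesis
    by (simp add: psi_sigma_eq_normal_density mult.commute add_pos_pos)
qed

lemma conv_le_of_dominated:
  assumes "\<And>y. f y \<le> g y" "\<And>y. 0 \<le> k y" "0 \<le> r"
    and "(\<integral>\<^sup>+y. ennreal (g y * k (x - y)) \<partial>lborel) = ennreal r"
  shows "conv f k x \<le> r"
  unfolding conv_def
proof (rule integral_real_bounded)
  have "(\<integral>\<^sup>+y. ennreal (f y * k (x - y)) \<partial>lborel) \<le> (\<integral>\<^sup>+y. ennreal (g y * k (x - y)) \<partial>lborel)"
    using assms(1,2) by (intro nn_integral_mono ennreal_leI mult_right_mono) auto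
  with assms(4) show "(\<integral>\<^sup>+y. ennreal (f y * k (x - y)) \<partial>lborel) \<le> ennreal r" by simp
qed (use assms(3) in simp)

lemma K_le_of_le_psi_sigma:
  assumes "\<And>y. f y \<le> C * psi_sigma a y" "C \<ge> 0" "a > 0" "\<sigma> > 0"
  shows "K \<sigma> f x \<le> C * psi_sigma (sqrt (a\<^sup>2 + \<sigma>\<^sup>2)) x"
  unfolding K_def
proof (rule conv_le_of_dominated[OF assms(1)])
  have "(\<integral>\<^sup>+y. ennreal (C * psi_sigma a y * psi_sigma \<sigma> (x - y)) \<partial>lborel)
      = (\<integral>\<^sup>+y. ennreal C * ennreal (psi_sigma a y * psi_sigma \<sigma> (x - y)) \<partial>lborel)"
    using assms(2) by (simp add: ennreal_mult' mult.assoc)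
  also have "\<dots> = ennreal C * ennreal (psi_sigma (sqrt (a\<^sup>2 + \<sigma>\<^sup>2)) x)"
    using assms(3,4) by (subst nn_integral_cmult) (auto simp: nn_integral_conv_psi_sigma)
  also have "\<dots> = ennreal (C * psi_sigma (sqrt (a\<^sup>2 + \<sigma>\<^sup>2)) x)"
    using assms(2) by (simp add: ennreal_mult')
  finally show "(\<integral>\<^sup>+y. ennreal (C * psi_sigma a y * psi_sigma \<sigma> (x - y)) \<partial>lborel)
      = ennreal (C * psi_sigma (sqrt (a\<^sup>2 + \<sigma>\<^sup>2)) x)" .
qed (use assms in \<open>simp_all add: psi_sigma_nonneg add_pos_pos\<close>)

lemma psi_antimono: "x\<^sup>2 \<le> y\<^sup>2 \<Longrightarrow> psi y \<le> psi x"
  by (simp add: psi_def divide_right_mono)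

lemma gaussian_width_scaling_le_one:
  fixes q1 q2 \<sigma> :: real
  assumes "0 < q1" "q1 \<le> 1" "0 < \<sigma>" "\<sigma> < 1 - q2\<^sup>2"
  shows "q2\<^sup>2 * (1 + q1\<^sup>2 * \<sigma>\<^sup>2) \<le> 1"
proof -
  have "\<sigma> \<le> 1"
    using assms(4) zero_le_power2[of q2] by linarith
  then have "\<sigma>\<^sup>2 \<le> \<sigma>"
    using assms(3) by (simp add: power2_eq_square mult_left_le)
  moreover have "q1\<^sup>2 * \<sigma>\<^sup>2 \<le> \<sigma>\<^sup>2"
    using assms(1,2) by (intro mult_left_le_one_le) (auto simp: power_le_one)
  ultimately have "q2\<^sup>2 * (1 + q1\<^sup>2 * \<sigma>\<^sup>2) \<le> q2\<^sup>2 * (2 - q2\<^sup>2)"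
    using assms(4) by (intro mult_left_mono) auto
  also have "\<dots> = 1 - (1 - q2\<^sup>2)\<^sup>2"
    by (simp add: power2_eq_square algebra_simps)
  finally show ?thesis
    using zero_le_power2[of "1 - q2\<^sup>2"] by linarith
qed

theorem lemma15:
  fixes f :: "real \<Rightarrow> real" and M q1 :: real
  assumes fpos: "\<And>x. f x > 0"
    and M: "M > 0"
    and q1: "0 < q1" "q1 \<le> 1"
    and bound: "\<And>x. f x \<le> M * psi (q1 * x)"
  shows "\<forall>q2 \<sigma>. 0 < q2 \<and> q2 < 1 \<and> 0 < \<sigma> \<and> \<sigma> < 1 - q2^2 \<longrightarrow>
           (\<forall>x. K \<sigma> f x \<le> 2 / sqrt 3 * M * psi (q1 * q2 * x))"
proof (intro allI impI)
  fix q2 \<sigma> x :: real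
  assume h: "0 < q2 \<and> q2 < 1 \<and> 0 < \<sigma> \<and> \<sigma> < 1 - q2^2"
  define s where "s = sqrt ((1 / q1)\<^sup>2 + \<sigma>\<^sup>2)"
  have s: "s > 0" "(q1 * s)\<^sup>2 = 1 + q1\<^sup>2 * \<sigma>\<^sup>2"
    using q1 by (auto simp: s_def power_mult_distrib field_simps add_pos_nonneg)
  then have "q1 * s \<ge> 1"
    using power2_le_imp_le[of 1 "q1 * s"] q1 by simp
  have "(q1 * q2 * x)\<^sup>2 = (q2 * (q1 * s))\<^sup>2 * (x / s)\<^sup>2"
    using s(1) by (simp add: power_mult_distrib power_divide)
  also have "\<dots> \<le> (x / s)\<^sup>2"
    using gaussian_width_scaling_le_one[OF q1, of \<sigma> q2] h s
    by (intro mult_left_le_one_le) (auto simp: power_mult_distrib)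
  finally have psi_le: "psi (x / s) \<le> psi (q1 * q2 * x)"
    by (rule psi_antimono)
  have "K \<sigma> f x \<le> M / q1 * psi_sigma s x"
    unfolding s_def using bound M q1 h
    by (intro K_le_of_le_psi_sigma) (simp_all add: psi_mult_eq_psi_sigma)
  also have "\<dots> = M * psi (x / s) / (q1 * s)"
    by (simp add: psi_sigma_def)
  also have "\<dots> \<le> M * psi (x / s)"
    using \<open>q1 * s \<ge> 1\<close> M by (simp add: divide_le_eq psi_def)
  also have "\<dots> \<le> M * psi (q1 * q2 * x)"
    using psi_le M by simp
  also have "\<dots> \<le> 2 / sqrt 3 * M * psi (q1 * q2 * x)"
  proof -
    have "1 \<le> 2 / sqrt 3"
      by (simp add: real_le_lsqrt)
    from mult_right_mono[OF this, of "M * psi (q1 * q2 * x)"] M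
    show ?thesis by (simp add: psi_def mult.assoc)
  qed
  finally show "K \<sigma> f x \<le> 2 / sqrt 3 * M * psi (q1 * q2 * x)" .
qed

end
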